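(* Let $X$ be a stacked simplicial complex of dimension $d$, let $h,k$ be faces of $X$ such that $h\cup k$ is not contained in any codimension one face, and let $h\,|\,f_1,\dots,f_p\,|\,k$ be a path between $h$ and $k$. Then for every $1\le i<p$ we have $h\not\subseteq f_i\cap f_{i+1}$ and $k\not\subseteq f_i\cap f_{i+1}$.
   Context: A simplicial complex $X$ on a finite vertex set $V$ is a family of subsets (faces) of $V$ closed under taking subsets, every element of $V$ lying in some face; facets are inclusion-maximal faces. $X$ is pure of dimension $d$ if every facet has $d+1$ elements; a codimension one face is a face with $d$ elements. $X$ is stacked if it is pure of some dimension $d$ and its facets can be ordered $F_0,F_1,\dots,F_k$ (a stacking order) such that for each $p\ge 1$, $F_p$ contains exactly one vertex $v_p$ not in $F_0\cup\dots\cup F_{p-1}$ (called the free vertex of $F_p$), and $F_p\setminus\{v_p\}\subseteq F_j$ for some $j<p$. A walk is a sequence of facets $f_1,\dots,f_p$ ($p\ge 1$) such that each $f_i\cap f_{i+1}$ has exactly $d$ elements; a path is a walk in which the faces $f_i\cap f_{i+1}$, $1\le i<p$, are pairwise distinct. For faces $h,k$ such that $h\cup k$ is not contained in any codimension one face, a path between $h$ and $k$, written $h\,|\,f_1,\dots,f_p\,|\,k$, is a path $f_1,\dots,f_p$ with $h\subseteq f_1$, $k\subseteq f_p$, and, if $p\ge 2$, $h\not\subseteq f_1\cap f_2$ and $k\not\subseteq f_p\cap f_{p-1}$. For a vertex $v$ one writes $v$ for $\{v\}$. *)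

theory Defs
  imports Main
begin

definition simplicial_complex :: "'a set \<Rightarrow> 'a set set \<Rightarrow> bool" where
  "simplicial_complex V X \<longleftrightarrow> finite V \<and> (\<forall>F\<in>X. F \<subseteq> V)
     \<and> (\<forall>F\<in>X. \<forall>G. G \<subseteq> F \<longrightarrow> G \<in> X) \<and> (\<forall>v\<in>V. \<exists>F\<in>X. v \<in> F)"

definition facets :: "'a set set \<Rightarrow> 'a set set" where
  "facets X = {F \<in> X. \<forall>G\<in>X. F \<subseteq> G \<longrightarrow> G = F}"

definition pure_dim :: "'a set set \<Rightarrow> nat \<Rightarrow> bool" where
  "pure_dim X d \<longleftrightarrow> (\<forall>F\<in>facets X. card F = d + 1)"

definition codim_one :: "'a set set \<Rightarrow> nat \<Rightarrow> 'a set \<Rightarrow> bool" where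
  "codim_one X d c \<longleftrightarrow> c \<in> X \<and> card c = d"

definition stacking_order :: "'a set set \<Rightarrow> 'a set list \<Rightarrow> bool" where
  "stacking_order X Fs \<longleftrightarrow> Fs \<noteq> [] \<and> distinct Fs \<and> set Fs = facets X \<and>
     (\<forall>p. 1 \<le> p \<and> p < length Fs \<longrightarrow>
        (\<exists>v. Fs ! p - \<Union>(set (take p Fs)) = {v} \<and>
             (\<exists>j<p. Fs ! p - {v} \<subseteq> Fs ! j)))"

definition stacked_dim :: "'a set set \<Rightarrow> nat \<Rightarrow> bool" where
  "stacked_dim X d \<longleftrightarrow> pure_dim X d \<and> (\<exists>Fs. stacking_order X Fs)"

text \<open>Walks (as lists f_1..f_p, 0-indexed) in a complex of dimension d.\<close>
definition walk :: "'a set set \<Rightarrow> nat \<Rightarrow> 'a set list \<Rightarrow> bool" where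
  "walk X d fs \<longleftrightarrow> fs \<noteq> [] \<and> set fs \<subseteq> facets X \<and>
     (\<forall>i. i + 1 < length fs \<longrightarrow> card (fs ! i \<inter> fs ! (i + 1)) = d)"

definition path :: "'a set set \<Rightarrow> nat \<Rightarrow> 'a set list \<Rightarrow> bool" where
  "path X d fs \<longleftrightarrow> walk X d fs \<and>
     distinct (map (\<lambda>i. fs ! i \<inter> fs ! (i + 1)) [0..<length fs - 1])"

definition path_between :: "'a set set \<Rightarrow> nat \<Rightarrow> 'a set \<Rightarrow> 'a set list \<Rightarrow> 'a set \<Rightarrow> bool" where
  "path_between X d h fs k \<longleftrightarrow> path X d fs \<and> h \<subseteq> hd fs \<and> k \<subseteq> last fs \<and>
     (2 \<le> length fs \<longrightarrow>
        \<not> h \<subseteq> fs ! 0 \<inter> fs ! 1 \<and>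
        \<not> k \<subseteq> fs ! (length fs - 1) \<inter> fs ! (length fs - 2))"

end

theory Submission
  imports Defs
begin

text \<open>
  Induct on a stacking order. Its last facet F has a vertex v lying in no other facet, so every
  ridge of a path adjacent to an occurrence of F equals F - v. Since the ridges of a path are
  distinct, F occurs at most once and only at an end, and there the neighbouring facet contains
  F - v. If a face h lies in both end facets it avoids v, hence passes into that neighbour, and
  the induction hypothesis applies to the rest of the path: every facet of the path contains h.
  So h in f_1 and in f_(i+1) would put h into f_1 \<inter> f_2, which a path between h and k excludes;
  symmetrically for k.
\<close>

definition ridges :: "'a set list \<Rightarrow> 'a set list" where
  "ridges fs = map (\<lambda>i. fs ! i \<inter> fs ! (i + 1)) [0..<length fs - 1]"

definition ridge_path :: "nat \<Rightarrow> 'a set list \<Rightarrow> bool" where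
  "ridge_path d fs \<longleftrightarrow> (\<forall>r\<in>set (ridges fs). card r = d) \<and> distinct (ridges fs)"

lemma length_ridges [simp]: "length (ridges fs) = length fs - 1"
  by (simp add: ridges_def)

lemma nth_ridges [simp]: "Suc i < length fs \<Longrightarrow> ridges fs ! i = fs ! i \<inter> fs ! Suc i"
  by (auto simp: ridges_def nth_upt)

lemma ridges_take: "ridges (take n fs) = take (n - 1) (ridges fs)"
  by (rule nth_equalityI) (auto simp: min_def split: if_splits)

lemma ridges_drop: "ridges (drop n fs) = drop n (ridges fs)"
  by (rule nth_equalityI) (auto simp: add.commute)

lemma ridges_rev: "ridges (rev fs) = rev (ridges fs)"
proof (rule nth_equalityI)
  fix i assume "i < length (ridges (rev fs))"
  then show "ridges (rev fs) ! i = rev (ridges fs) ! i"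
    by (auto simp: rev_nth Int_commute Suc_diff_Suc)
qed simp

lemma ridge_path_take: "ridge_path d fs \<Longrightarrow> ridge_path d (take n fs)"
  unfolding ridge_path_def ridges_take by (auto dest: in_set_takeD)

lemma ridge_path_drop: "ridge_path d fs \<Longrightarrow> ridge_path d (drop n fs)"
  unfolding ridge_path_def ridges_drop by (auto dest: in_set_dropD)

lemma ridge_path_rev: "ridge_path d fs \<Longrightarrow> ridge_path d (rev fs)"
  unfolding ridge_path_def ridges_rev by simp

lemma ridge_path_card:
  "ridge_path d fs \<Longrightarrow> Suc i < length fs \<Longrightarrow> card (fs ! i \<inter> fs ! Suc i) = d"
  unfolding ridge_path_def by (metis length_ridges less_diff_conv nth_mem nth_ridges Suc_eq_plus1)

lemma ridge_path_ridges_inj: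
  assumes "ridge_path d fs" "Suc i < length fs" "Suc j < length fs"
    and "fs ! i \<inter> fs ! Suc i = fs ! j \<inter> fs ! Suc j"
  shows "i = j"
  using assms nth_eq_iff_index_eq[of "ridges fs" i j] unfolding ridge_path_def by simp

lemma path_imp_ridge_path: "path X d fs \<Longrightarrow> ridge_path d fs"
  unfolding path_def walk_def ridge_path_def ridges_def by auto

context
  fixes d :: nat and fs :: "'a set list" and F :: "'a set" and v :: 'a
  assumes path: "ridge_path d fs"
    and card_facets: "\<forall>g\<in>set fs. card g = Suc d"
    and fresh: "v \<in> F" "\<forall>g\<in>set fs. g \<noteq> F \<longrightarrow> v \<notin> g"
begin

lemma ridge_at_fresh_facet:
  assumes i: "Suc i < length fs" and F: "fs ! i = F \<or> fs ! Suc i = F"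
  shows "fs ! i \<inter> fs ! Suc i = F - {v}"
proof -
  have card_ridge: "card (fs ! i \<inter> fs ! Suc i) = d"
    using ridge_path_card[OF path i] .
  have in_fs: "fs ! i \<in> set fs" "fs ! Suc i \<in> set fs"
    using i by simp_all
  have "card F = Suc d"
    using F in_fs card_facets by auto
  then have "finite F" and card_F: "card (F - {v}) = d"
    using fresh(1) card.infinite by fastforce+
  have "fs ! i \<noteq> fs ! Suc i"
    using card_ridge card_facets in_fs by fastforce
  then have "fs ! i \<inter> fs ! Suc i \<subseteq> F - {v}"
    using F in_fs fresh(2) by auto
  then show ?thesis
    using \<open>finite F\<close> card_ridge card_F by (metis card_subset_eq finite_Diff)
qed

lemma fresh_facet_hd_or_last:
  assumes "F \<in> set fs"
  shows "hd fs = F \<or> last fs = F"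
proof -
  obtain i where i: "i < length fs" "fs ! i = F"
    using assms by (auto simp: in_set_conv_nth)
  have "i = 0 \<or> Suc i = length fs"
  proof (rule ccontr)
    assume "\<not> (i = 0 \<or> Suc i = length fs)"
    then obtain j where j: "i = Suc j" "Suc i < length fs"
      using i(1) by (cases i) auto
    have "fs ! j \<inter> fs ! Suc j = F - {v}" "fs ! i \<inter> fs ! Suc i = F - {v}"
      using ridge_at_fresh_facet[of j] ridge_at_fresh_facet[of i] i(2) j by auto
    then show False
      using ridge_path_ridges_inj[OF path, of j i] j by simp
  qed
  then show ?thesis
    using i by (metis diff_Suc_1 hd_conv_nth last_conv_nth list.size(3) not_less0)
qed

lemma fresh_facet_not_in_tl:
  assumes "hd fs = F" shows "F \<notin> set (tl fs)"
proof
  assume "F \<in> set (tl fs)"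
  then obtain j where j: "Suc j < length fs" "fs ! Suc j = F"
    by (metis in_set_conv_nth length_tl less_diff_conv nth_tl Suc_eq_plus1)
  have F0: "fs ! 0 = F"
    using assms j hd_conv_nth[of fs] by force
  show False
  proof (cases j)
    case 0
    then have "F - {v} = F"
      using ridge_at_fresh_facet[of 0] F0 j by simp
    then show False using fresh(1) by blast
  next
    case (Suc j')
    have "fs ! 0 \<inter> fs ! Suc 0 = F - {v}" "fs ! j \<inter> fs ! Suc j = F - {v}"
      using ridge_at_fresh_facet[of 0] ridge_at_fresh_facet[of j] F0 j Suc by auto
    then have "fs ! 0 \<inter> fs ! Suc 0 = fs ! j \<inter> fs ! Suc j"
      by simp
    then show False
      using ridge_path_ridges_inj[OF path, of 0 j] j Suc by simp
  qed
qed

lemma fresh_facet_hd_subset_next: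
  assumes fs: "fs = F # g # rest" and h: "h \<subseteq> F" "h \<subseteq> last fs"
  shows "h \<subseteq> g"
proof -
  have "last fs \<in> set (tl fs)"
    using fs by simp
  then have "v \<notin> last fs"
    using fresh_facet_not_in_tl fresh(2) fs by (metis list.sel(1) list.set_sel(2) list.discI)
  moreover have "F \<inter> g = F - {v}"
    using ridge_at_fresh_facet[of 0] fs by simp
  ultimately show ?thesis
    using h by blast
qed

end

definition free_vertex_order :: "'a set list \<Rightarrow> bool" where
  "free_vertex_order Fs \<longleftrightarrow>
     (\<forall>p. 1 \<le> p \<and> p < length Fs \<longrightarrow> (\<exists>v. Fs ! p - \<Union>(set (take p Fs)) = {v}))"

lemma stacking_order_imp_free_vertex_order: "stacking_order X Fs \<Longrightarrow> free_vertex_order Fs"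
  unfolding stacking_order_def free_vertex_order_def by blast

lemma free_vertex_order_snocD:
  assumes "free_vertex_order (xs @ [F])"
  shows "free_vertex_order xs" and "xs \<noteq> [] \<Longrightarrow> \<exists>v. F - \<Union>(set xs) = {v}"
proof -
  show "free_vertex_order xs"
    unfolding free_vertex_order_def
  proof (intro allI impI)
    fix p assume "1 \<le> p \<and> p < length xs"
    then show "\<exists>v. xs ! p - \<Union>(set (take p xs)) = {v}"
      using assms unfolding free_vertex_order_def by (auto simp: nth_append dest!: spec[of _ p])
  qed
  show "\<exists>v. F - \<Union>(set xs) = {v}" if "xs \<noteq> []"
    using assms that unfolding free_vertex_order_def
    by (cases xs) (auto dest!: spec[of _ "length xs"])
qed

theorem ridge_path_convex:
  assumes "free_vertex_order Fs" "\<forall>F\<in>set Fs. card F = Suc d"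
    and "set fs \<subseteq> set Fs" "ridge_path d fs" "fs \<noteq> []"
    and "h \<subseteq> hd fs" "h \<subseteq> last fs"
  shows "\<forall>g\<in>set fs. h \<subseteq> g"
  using assms
proof (induction Fs arbitrary: fs rule: rev_induct)
  case Nil
  then show ?case by simp
next
  case (snoc F xs)
  have order: "free_vertex_order xs" and cards: "\<forall>F\<in>set xs. card F = Suc d"
    using snoc.prems(1,2) free_vertex_order_snocD by auto
  have cards_fs: "\<forall>g\<in>set fs. card g = Suc d"
    using snoc.prems(2,3) by auto
  show ?case
  proof (cases "F \<in> set fs")
    case False
    then have "set fs \<subseteq> set xs"
      using snoc.prems(3) by auto
    then show ?thesis
      using snoc.IH[OF order cards] snoc.prems(4-) by blast
  next
    case F_in: True
    show ?thesis
    proof (cases "xs = []")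
      case True
      then have "set fs = {F}"
        using snoc.prems(3,5) by (auto simp: subset_singleton_iff)
      then show ?thesis
        using snoc.prems(5,6) by (metis hd_in_set singletonD)
    next
      case False
      then obtain v where "F - \<Union>(set xs) = {v}"
        using free_vertex_order_snocD(2)[OF snoc.prems(1)] by blast
      then have "v \<in> F" and fresh: "\<forall>g\<in>set fs. g \<noteq> F \<longrightarrow> v \<notin> g"
        using snoc.prems(3) by auto
      have F_end: "hd fs = F \<or> last fs = F"
        using fresh_facet_hd_or_last[OF snoc.prems(4) cards_fs \<open>v \<in> F\<close> fresh F_in] .
      then have "h \<subseteq> F"
        using snoc.prems(6,7) by auto
      \<comment> \<open>Reversing the path reduces the case of F at the last position to F at the head.\<close>
      have from_hd: "\<forall>g\<in>set gs. h \<subseteq> g"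
        if gs: "set gs = set fs" "ridge_path d gs" "hd gs = F" "h \<subseteq> last gs" for gs
      proof -
        obtain rest where gs_eq: "gs = F # rest"
          using gs(1,3) snoc.prems(5) by (metis hd_Cons_tl set_empty)
        show ?thesis
        proof (cases rest)
          case Nil
          then show ?thesis using gs_eq \<open>h \<subseteq> F\<close> by simp
        next
          case (Cons g rest')
          note fresh_gs = gs(2) cards_fs[folded gs(1)] \<open>v \<in> F\<close> fresh[folded gs(1)]
          have "F \<notin> set rest"
            using fresh_facet_not_in_tl[OF fresh_gs gs(3)] gs_eq by simp
          then have "set rest \<subseteq> set xs"
            using gs(1) snoc.prems(3) gs_eq by auto
          moreover have "h \<subseteq> hd rest"
            using fresh_facet_hd_subset_next[OF fresh_gs] gs(4) \<open>h \<subseteq> F\<close> gs_eq Cons by simp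
          moreover have "ridge_path d rest"
            using ridge_path_drop[OF gs(2), of 1] gs_eq by simp
          moreover have "h \<subseteq> last rest"
            using gs(4) gs_eq Cons by simp
          ultimately have "\<forall>g\<in>set rest. h \<subseteq> g"
            using snoc.IH[OF order cards] Cons by blast
          then show ?thesis
            using gs_eq \<open>h \<subseteq> F\<close> by simp
        qed
      qed
      from F_end show ?thesis
      proof
        assume "hd fs = F"
        then show ?thesis
          using from_hd snoc.prems(4,7) by simp
      next
        assume "last fs = F"
        then have "\<forall>g\<in>set (rev fs). h \<subseteq> g"
          using snoc.prems(5,6)
          by (intro from_hd ridge_path_rev[OF snoc.prems(4)]) (simp_all add: hd_rev last_rev)
        then show ?thesis
          by simp
      qed
    qed
  qed
qed

corollary ridge_path_convex_nth:
  assumes "free_vertex_order Fs" "\<forall>F\<in>set Fs. card F = Suc d"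
    and "set fs \<subseteq> set Fs" "ridge_path d fs"
    and "h \<subseteq> fs ! i" "h \<subseteq> fs ! j" "i \<le> l" "l \<le> j" "j < length fs"
  shows "h \<subseteq> fs ! l"
proof -
  define gs where "gs = take (Suc j - i) (drop i fs)"
  have path: "ridge_path d gs"
    unfolding gs_def using assms(4) by (intro ridge_path_take ridge_path_drop)
  have sub: "set gs \<subseteq> set Fs"
    unfolding gs_def using assms(3) by (meson in_set_dropD in_set_takeD subset_iff)
  have len: "length gs = Suc j - i"
    unfolding gs_def using assms(7-9) by simp
  have nth_gs: "gs ! m = fs ! (i + m)" if "m < length gs" for m
    using that len assms(7-9) unfolding gs_def by simp
  have ne: "gs \<noteq> []"
    using len assms(7,8) by auto
  have "hd gs = fs ! i"
    using ne nth_gs[of 0] by (simp add: hd_conv_nth)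
  moreover have "last gs = fs ! j"
    using ne len nth_gs[of "j - i"] assms(7,8) by (simp add: last_conv_nth)
  moreover have "fs ! l \<in> set gs"
    using nth_mem[of "l - i" gs] nth_gs[of "l - i"] len assms(7,8) by simp
  ultimately show ?thesis
    using ridge_path_convex[OF assms(1,2) sub path ne] assms(5,6) by simp
qed

theorem lemma2p8:
  fixes V :: "'a set" and X :: "'a set set" and d :: nat
    and h k :: "'a set" and fs :: "'a set list"
  assumes "simplicial_complex V X"
    and "stacked_dim X d"
    and "h \<in> X" and "k \<in> X"
    and "\<not> (\<exists>c. codim_one X d c \<and> h \<union> k \<subseteq> c)"
    and "path_between X d h fs k"
  shows "\<forall>i. i + 1 < length fs \<longrightarrow>
           \<not> h \<subseteq> fs ! i \<inter> fs ! (i + 1) \<and> \<not> k \<subseteq> fs ! i \<inter> fs ! (i + 1)"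
proof (intro allI impI)
  fix i assume i: "i + 1 < length fs"
  obtain Fs where Fs: "stacking_order X Fs"
    using assms(2) unfolding stacked_dim_def by blast
  have order: "free_vertex_order Fs"
    using Fs by (rule stacking_order_imp_free_vertex_order)
  have cards: "\<forall>F\<in>set Fs. card F = Suc d"
    using Fs assms(2) unfolding stacking_order_def stacked_dim_def pure_dim_def by simp
  have path: "ridge_path d fs" "set fs \<subseteq> set Fs" "fs \<noteq> []"
    using assms(6) Fs path_imp_ridge_path
    unfolding path_between_def path_def walk_def stacking_order_def by auto
  have ends: "h \<subseteq> fs ! 0" "k \<subseteq> fs ! (length fs - 1)"
    "\<not> h \<subseteq> fs ! 0 \<inter> fs ! 1" "\<not> k \<subseteq> fs ! (length fs - 1) \<inter> fs ! (length fs - 2)"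
    using assms(6) path(3) i unfolding path_between_def by (auto simp: hd_conv_nth last_conv_nth)
  have "h \<subseteq> fs ! 1" if "h \<subseteq> fs ! (i + 1)"
    using ridge_path_convex_nth[OF order cards path(2,1) ends(1) that] i by simp
  then have "\<not> h \<subseteq> fs ! (i + 1)"
    using ends(1,3) by blast
  moreover have "k \<subseteq> fs ! (length fs - 2)" if "k \<subseteq> fs ! i"
    using ridge_path_convex_nth[OF order cards path(2,1) that ends(2)] i by simp
  then have "\<not> k \<subseteq> fs ! i"
    using ends(2,4) by blast
  ultimately show "\<not> h \<subseteq> fs ! i \<inter> fs ! (i + 1) \<and> \<not> k \<subseteq> fs ! i \<inter> fs ! (i + 1)"
    by auto
qed

end
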